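(* Let $\mathbf A\in\mathbb C^{m\times n}$ with $\operatorname{rank}\mathbf A=r$, where $r<\min\{m,n\}$ or $r=n<m$. Then the projection matrix $\mathbf Q=\mathbf A\mathbf A^{+}\in\mathbb C^{m\times m}$ has entries \[ (\mathbf Q)_{ij}=\frac{q_{ij}}{d_r(\mathbf A\mathbf A^{*})},\qquad q_{ij}=\sum_{\alpha\in I_{r,m}\{j\}}\left|\left((\mathbf A\mathbf A^{*})_{j.}(\mathbf g_{i.})\right)^{\alpha}_{\alpha}\right|,\quad i,j=1,\dots,m,\] where $\mathbf g_{i.}$ is the $i$-th row of $\mathbf A\mathbf A^{*}$.
   Context: $\mathbf A^{+}$ is the Moore–Penrose inverse (unique $\mathbf X$ with $\mathbf A\mathbf X\mathbf A=\mathbf A$, $\mathbf X\mathbf A\mathbf X=\mathbf X$, $(\mathbf A\mathbf X)^{*}=\mathbf A\mathbf X$, $(\mathbf X\mathbf A)^{*}=\mathbf X\mathbf A$). $\mathbf M_{j.}(\mathbf c)$ denotes $\mathbf M$ with its $j$-th row replaced by the row vector $\mathbf c$. $I_{r,m}$ is the set of strictly increasing sequences of $r$ elements of $\{1,\dots,m\}$, $I_{r,m}\{j\}=\{\alpha\in I_{r,m}:j\in\alpha\}$, $\mathbf M^{\alpha}_{\alpha}$ is the principal submatrix indexed by $\alpha$, $|\cdot|$ is the determinant, and $d_r(\mathbf M)=\sum_{\alpha\in I_{r,m}}|\mathbf M^{\alpha}_{\alpha}|$. *)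

theory Defs
  imports "Jordan_Normal_Form.Schur_Decomposition" "Jordan_Normal_Form.DL_Submatrix" "Jordan_Normal_Form.DL_Rank"
begin

definition moore_penrose :: "complex mat \<Rightarrow> complex mat" where
  "moore_penrose A = (THE X. X \<in> carrier_mat (dim_col A) (dim_row A) \<and>
      A * X * A = A \<and> X * A * X = X \<and>
      mat_adjoint (A * X) = A * X \<and> mat_adjoint (X * A) = X * A)"

definition replace_row :: "'a mat \<Rightarrow> nat \<Rightarrow> 'a vec \<Rightarrow> 'a mat" where
  "replace_row M j c = mat (dim_row M) (dim_col M) (\<lambda>(i,k). if i = j then c $ k else M $$ (i,k))"

text \<open>I_{r,m} as r-element subsets of {0..<m} (indices are 0-based).\<close>
definition index_sets :: "nat \<Rightarrow> nat \<Rightarrow> nat set set" where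
  "index_sets r m = {\<alpha>. \<alpha> \<subseteq> {0..<m} \<and> card \<alpha> = r}"

definition d_r :: "nat \<Rightarrow> 'a :: comm_ring_1 mat \<Rightarrow> 'a" where
  "d_r r M = (\<Sum>\<alpha>\<in>index_sets r (dim_row M). det (submatrix M \<alpha> \<alpha>))"

end

theory Submission
  imports Defs
begin

text \<open>
  Take a full rank factorization \<open>A = F C\<close> with \<open>F \<in> \<complex>\<^sup>m\<^sup>\<times>\<^sup>r\<close>, \<open>C \<in> \<complex>\<^sup>r\<^sup>\<times>\<^sup>n\<close>.
  Then \<open>A\<^sup>+ = C\<^sup>* (C C\<^sup>*)\<^sup>-\<^sup>1 (F\<^sup>* F)\<^sup>-\<^sup>1 F\<^sup>*\<close>, so with \<open>K = C A\<^sup>*\<close> and the invertible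
  \<open>M = K F\<close> we get \<open>A A\<^sup>* = F K\<close> and \<open>Q = A A\<^sup>+ = F M\<^sup>-\<^sup>1 K\<close>. By Cauchy--Binet the sum of
  the principal \<open>r \<times> r\<close> minors of \<open>F K\<close> is \<open>det (K F)\<close>; hence \<open>d\<^sub>r(A A\<^sup>*) = det M\<close>.
  Replacing row \<open>j\<close> of \<open>A A\<^sup>* = F K\<close> by row \<open>i\<close> gives \<open>F' K\<close>, where \<open>F'\<close> is \<open>F\<close> with
  row \<open>j\<close> replaced by row \<open>i\<close>. The principal minors through \<open>j\<close> are the full minor sum
  minus the minor sum after zeroing row \<open>j\<close>, i.e. \<open>det (K F') - det (K F\<^sub>0)\<close> with \<open>F\<^sub>0\<close> the
  matrix \<open>F\<close> with row \<open>j\<close> zeroed. Both are rank one updates of \<open>M\<close>, and the matrix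
  determinant lemma turns the difference into \<open>det M \<cdot> (row i of F) M\<^sup>-\<^sup>1 (column j of K)\<close>,
  which is \<open>det M \<cdot> Q\<^sub>i\<^sub>j\<close>.
\<close>

lemma assoc_mult_mat_dim:
  fixes A B C :: "'a :: semiring_0 mat"
  shows "dim_col A = dim_row B \<Longrightarrow> dim_col B = dim_row C \<Longrightarrow> A * B * C = A * (B * C)"
  by (rule assoc_mult_mat[of A "dim_row A" "dim_col A" B "dim_col B" C "dim_col C"]) auto

lemma mult_mult_cancel_left:
  fixes P X Y Z :: "'a :: semiring_1 mat"
  assumes inv: "P * (X * Y) = 1\<^sub>m r" and "dim_col P = dim_row X" "dim_col X = dim_row Y"
    and Z: "dim_row Z = r"
  shows "P * (X * (Y * Z)) = Z"
proof -
  have "dim_col Y = r" using arg_cong[OF inv, of dim_col] by simp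
  then have "P * (X * Y) * Z = P * (X * (Y * Z))" using assms(2-4) by (simp add: assoc_mult_mat_dim)
  then show ?thesis using inv Z by simp
qed

definition adj_inverse :: "'a :: field mat \<Rightarrow> 'a mat" where
  "adj_inverse N = (1 / det N) \<cdot>\<^sub>m adj_mat N"

lemma adj_inverse:
  assumes N: "N \<in> carrier_mat n n" and d: "det N \<noteq> 0"
  shows "adj_inverse N \<in> carrier_mat n n" "N * adj_inverse N = 1\<^sub>m n" "adj_inverse N * N = 1\<^sub>m n"
proof -
  note adj = adj_mat[OF N]
  show "adj_inverse N \<in> carrier_mat n n" unfolding adj_inverse_def using adj by auto
  have "N * adj_inverse N = (1 / det N) \<cdot>\<^sub>m (N * adj_mat N)"
    unfolding adj_inverse_def using N adj by (simp add: mult_smult_distrib)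
  then show "N * adj_inverse N = 1\<^sub>m n" unfolding adj using d by (auto intro: eq_matI)
  have "adj_inverse N * N = (1 / det N) \<cdot>\<^sub>m (adj_mat N * N)"
    unfolding adj_inverse_def using N adj by (simp add: mult_smult_assoc_mat)
  then show "adj_inverse N * N = 1\<^sub>m n" unfolding adj using d by (auto intro: eq_matI)
qed

lemma det_add_rank_one:
  fixes M Mi U W :: "'a :: idom mat"
  assumes M: "M \<in> carrier_mat r r" and Mi: "Mi \<in> carrier_mat r r" and inv: "M * Mi = 1\<^sub>m r"
    and U: "U \<in> carrier_mat r 1" and W: "W \<in> carrier_mat 1 r"
  shows "det (M + U * W) = det M * (1 + (W * Mi * U) $$ (0,0))"
proof -
  define X where "X = W * Mi * U"
  have X: "X \<in> carrier_mat 1 1" using W Mi U unfolding X_def by auto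
  have UW: "U * W \<in> carrier_mat r r" and MiU: "Mi * U \<in> carrier_mat r 1" using U W Mi by auto
  \<comment> \<open>two block factorizations of \<open>[[1, -W], [U, M]]\<close>\<close>
  define B where "B = four_block_mat (1\<^sub>m 1) (- W) U M"
  define L1 where "L1 = four_block_mat (1\<^sub>m 1) (0\<^sub>m 1 r) U (1\<^sub>m r)"
  define R1 where "R1 = four_block_mat (1\<^sub>m 1) (- W) (0\<^sub>m r 1) (M + U * W)"
  define L2 where "L2 = four_block_mat (1\<^sub>m 1 + X) (- W) (0\<^sub>m r 1) M"
  define R2 where "R2 = four_block_mat (1\<^sub>m 1) (0\<^sub>m 1 r) (Mi * U) (1\<^sub>m r)"
  have "L1 * R1 = B" unfolding L1_def R1_def B_def
    by (subst mult_four_block_mat[of _ 1 1 _ r _ r _ _ 1 _ r])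
      (use U W M UW in \<open>auto intro!: cong_four_block_mat eq_matI\<close>)
  moreover have "L2 * R2 = B"
  proof -
    have "W * (Mi * U) = X" unfolding X_def using W Mi U by (simp add: assoc_mult_mat)
    moreover have "M * (Mi * U) = U" using M Mi U inv by (simp add: assoc_mult_mat[symmetric])
    ultimately show ?thesis unfolding L2_def R2_def B_def
      by (subst mult_four_block_mat[of _ 1 1 _ r _ r _ _ 1 _ r])
        (use U W M X MiU in \<open>auto intro!: cong_four_block_mat eq_matI\<close>)
  qed
  moreover have "L1 \<in> carrier_mat (1+r) (1+r)" "R1 \<in> carrier_mat (1+r) (1+r)"
    "L2 \<in> carrier_mat (1+r) (1+r)" "R2 \<in> carrier_mat (1+r) (1+r)"
    unfolding L1_def R1_def L2_def R2_def
    by (rule four_block_carrier_mat; use M UW X MiU W in auto)+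
  moreover have "det L1 = 1" unfolding L1_def
    by (subst det_four_block_mat_upper_right_zero[of _ 1 _ r]) (use U in auto)
  moreover have "det R2 = 1" unfolding R2_def
    by (subst det_four_block_mat_upper_right_zero[of _ 1 _ r]) (use MiU in auto)
  moreover have "det R1 = det (M + U * W)" unfolding R1_def
    by (subst det_four_block_mat_lower_left_zero[of _ 1 _ r]) (use W M UW in auto)
  moreover have "det L2 = det (1\<^sub>m 1 + X) * det M" unfolding L2_def
    by (subst det_four_block_mat_lower_left_zero[of _ 1 _ r]) (use W M X in auto)
  moreover have "det (1\<^sub>m 1 + X) = 1 + X $$ (0,0)" using det_single[of "1\<^sub>m 1 + X"] X by auto
  ultimately show ?thesis unfolding X_def by (metis det_mult mult.commute mult_1)
qed

section \<open>Conjugate transpose and Gram matrices\<close>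

lemma mat_adjoint_alt:
  "mat_adjoint (A :: complex mat) = mat (dim_col A) (dim_row A) (\<lambda>(i,j). cnj (A $$ (j,i)))"
  unfolding mat_adjoint_def by (auto simp: mat_of_rows_def)

lemma mat_adjoint_dim [simp]:
  "dim_row (mat_adjoint (A :: complex mat)) = dim_col A"
  "dim_col (mat_adjoint (A :: complex mat)) = dim_row A"
  unfolding mat_adjoint_alt by auto

lemma mat_adjoint_index [simp]:
  "i < dim_col A \<Longrightarrow> j < dim_row A \<Longrightarrow> mat_adjoint (A :: complex mat) $$ (i,j) = cnj (A $$ (j,i))"
  unfolding mat_adjoint_alt by auto

lemma mat_adjoint_carrier [simp, intro]:
  "(A :: complex mat) \<in> carrier_mat m n \<Longrightarrow> mat_adjoint A \<in> carrier_mat n m"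
  unfolding carrier_mat_def by auto

lemma mat_adjoint_adjoint [simp]: "mat_adjoint (mat_adjoint (A :: complex mat)) = A"
  by (rule eq_matI) auto

lemma mat_adjoint_mult:
  "dim_col (A :: complex mat) = dim_row B \<Longrightarrow> mat_adjoint (A * B) = mat_adjoint B * mat_adjoint A"
  by (intro eq_matI) (auto simp: scalar_prod_def cnj_sum intro!: sum.cong)

lemma mat_adjoint_one [simp]: "mat_adjoint (1\<^sub>m n :: complex mat) = 1\<^sub>m n"
  by (rule eq_matI) auto

lemma adj_inverse_hermitian:
  assumes N: "(N :: complex mat) \<in> carrier_mat n n" and d: "det N \<noteq> 0" and h: "mat_adjoint N = N"
  shows "mat_adjoint (adj_inverse N) = adj_inverse N"
proof -
  note inv = adj_inverse[OF N d]
  have left_inv: "mat_adjoint (adj_inverse N) * N = 1\<^sub>m n"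
    using mat_adjoint_mult[of N "adj_inverse N"] inv h N by simp
  have "mat_adjoint (adj_inverse N) = mat_adjoint (adj_inverse N) * (N * adj_inverse N)"
    using inv by auto
  also have "\<dots> = mat_adjoint (adj_inverse N) * N * adj_inverse N"
    by (rule assoc_mult_mat_dim[symmetric]) (use N inv in auto)
  finally show ?thesis using left_inv inv by simp
qed

lemma mat_adjoint_mult_vec_eq_0:
  assumes F: "(F :: complex mat) \<in> carrier_mat m r" and x: "x \<in> carrier_vec r"
    and z: "mat_adjoint F *\<^sub>v (F *\<^sub>v x) = 0\<^sub>v r"
  shows "F *\<^sub>v x = 0\<^sub>v m"
proof -
  define y where "y = F *\<^sub>v x"
  have y: "y \<in> carrier_vec m" unfolding y_def using F x by auto
  \<comment> \<open>\<open>\<parallel>F x\<parallel>\<^sup>2 = x\<^sup>* F\<^sup>* F x = 0\<close>\<close>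
  have "(\<Sum>i<m. y$i * cnj (y$i)) = (\<Sum>i<m. \<Sum>l<r. y$i * cnj (F $$ (i,l)) * cnj (x $ l))"
    unfolding y_def using F x
    by (auto simp: scalar_prod_def cnj_sum sum_distrib_left ac_simps atLeast0LessThan intro!: sum.cong)
  also have "\<dots> = (\<Sum>l<r. \<Sum>i<m. y$i * cnj (F $$ (i,l)) * cnj (x $ l))" by (rule sum.swap)
  also have "\<dots> = (\<Sum>l<r. cnj (x $ l) * (mat_adjoint F *\<^sub>v y) $ l)"
    using F y by (auto simp: scalar_prod_def sum_distrib_left ac_simps atLeast0LessThan intro!: sum.cong)
  also have "\<dots> = 0" using z unfolding y_def by auto
  finally have "complex_of_real (\<Sum>i<m. (cmod (y$i))\<^sup>2) = 0"
    by (simp only: of_real_sum complex_norm_square)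
  then have "(\<Sum>i<m. (cmod (y$i))\<^sup>2) = 0" by (simp only: of_real_eq_0_iff)
  then have "\<forall>i\<in>{..<m}. (cmod (y$i))\<^sup>2 = 0"
    by (subst sum_nonneg_eq_0_iff[symmetric]) auto
  then show ?thesis using y unfolding y_def[symmetric] by (intro eq_vecI) auto
qed

lemma det_gram_nonzero:
  assumes F: "(F :: complex mat) \<in> carrier_mat m r"
    and inj: "\<And>x. x \<in> carrier_vec r \<Longrightarrow> F *\<^sub>v x = 0\<^sub>v m \<Longrightarrow> x = 0\<^sub>v r"
  shows "det (mat_adjoint F * F) \<noteq> 0"
proof
  assume "det (mat_adjoint F * F) = 0"
  moreover have "mat_adjoint F * F \<in> carrier_mat r r" using F by auto
  ultimately obtain x where x: "x \<in> carrier_vec r" "x \<noteq> 0\<^sub>v r" "(mat_adjoint F * F) *\<^sub>v x = 0\<^sub>v r"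
    using det_0_iff_vec_prod_zero_field by blast
  then have "mat_adjoint F *\<^sub>v (F *\<^sub>v x) = 0\<^sub>v r"
    using assoc_mult_mat_vec[of "mat_adjoint F" r m F r x] F by simp
  with mat_adjoint_mult_vec_eq_0[OF F x(1)] inj x show False by auto
qed

lemma det_gram_adjoint_nonzero:
  assumes C: "(C :: complex mat) \<in> carrier_mat r n"
    and unit: "\<And>l. l < r \<Longrightarrow> \<exists>k<n. col C k = unit_vec r l"
  shows "det (C * mat_adjoint C) \<noteq> 0"
proof -
  have "x = 0\<^sub>v r" if x: "x \<in> carrier_vec r" and z: "mat_adjoint C *\<^sub>v x = 0\<^sub>v n" for x
  proof (rule eq_vecI)
    fix l assume "l < dim_vec (0\<^sub>v r)"
    then obtain k where l: "l < r" and k: "k < n" and ck: "col C k = unit_vec r l" using unit by auto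
    have "(mat_adjoint C *\<^sub>v x) $ k = (\<Sum>t = 0..<r. x $ t * cnj (col C k $ t))"
      using C x k by (auto simp: scalar_prod_def ac_simps intro!: sum.cong)
    also have "\<dots> = x $ l" unfolding ck using l by (simp add: if_distrib cong: if_cong)
    finally show "x $ l = 0\<^sub>v r $ l" using z k l by simp
  qed (use x in simp)
  then show ?thesis using det_gram_nonzero[of "mat_adjoint C" n r] C by simp
qed

section \<open>The Moore--Penrose inverse of a full rank factorization\<close>

definition penrose_conditions :: "complex mat \<Rightarrow> complex mat \<Rightarrow> bool" where
  "penrose_conditions A X \<longleftrightarrow> X \<in> carrier_mat (dim_col A) (dim_row A) \<and>
      A * X * A = A \<and> X * A * X = X \<and>
      mat_adjoint (A * X) = A * X \<and> mat_adjoint (X * A) = X * A"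

lemma penrose_conditions_unique:
  assumes A: "A \<in> carrier_mat m n" and X: "penrose_conditions A X" and Y: "penrose_conditions A Y"
  shows "X = Y"
proof -
  have "X \<in> carrier_mat n m" "Y \<in> carrier_mat n m"
    using X Y A unfolding penrose_conditions_def by auto
  then have [simp]: "dim_row A = m" "dim_col A = n" "dim_row X = n" "dim_col X = m"
    "dim_row Y = n" "dim_col Y = m" using A by auto
  from X have X1: "A * X * A = A" and X2: "X * A * X = X" and X3: "mat_adjoint (A * X) = A * X"
    and X4: "mat_adjoint (X * A) = X * A" unfolding penrose_conditions_def by auto
  from Y have Y1: "A * Y * A = A" and Y2: "Y * A * Y = Y" and Y3: "mat_adjoint (A * Y) = A * Y"
    and Y4: "mat_adjoint (Y * A) = Y * A" unfolding penrose_conditions_def by auto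
  have adjoint_A_right: "mat_adjoint A = mat_adjoint A * (A * Y)"
  proof -
    have "mat_adjoint A = mat_adjoint (A * Y * A)" using Y1 by simp
    also have "\<dots> = mat_adjoint A * mat_adjoint (A * Y)" by (simp add: mat_adjoint_mult)
    finally show ?thesis using Y3 by simp
  qed
  have adjoint_A_left: "mat_adjoint A = X * A * mat_adjoint A"
  proof -
    have "mat_adjoint A = mat_adjoint (A * (X * A))" using X1 by (simp add: assoc_mult_mat_dim)
    also have "\<dots> = mat_adjoint (X * A) * mat_adjoint A" by (simp add: mat_adjoint_mult)
    finally show ?thesis using X4 by simp
  qed
  have "X = X * (mat_adjoint X * mat_adjoint A)"
    using X2 X3 by (simp add: assoc_mult_mat_dim mat_adjoint_mult)
  also have "\<dots> = X * (mat_adjoint X * mat_adjoint A * (A * Y))"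
    by (subst adjoint_A_right) (simp add: assoc_mult_mat_dim)
  also have "\<dots> = X * (A * X * A * Y)"
    using X3 by (simp add: mat_adjoint_mult assoc_mult_mat_dim)
  also have "\<dots> = X * A * Y"
    unfolding X1 by (simp add: assoc_mult_mat_dim)
  finally have "X = X * A * Y" .
  have "Y = mat_adjoint A * mat_adjoint Y * Y"
    using Y2 Y4 by (simp add: mat_adjoint_mult)
  also have "\<dots> = X * A * (mat_adjoint A * mat_adjoint Y) * Y"
    by (subst adjoint_A_left) (simp add: assoc_mult_mat_dim)
  also have "\<dots> = X * A * (Y * A * Y)"
    using Y4 by (simp add: mat_adjoint_mult assoc_mult_mat_dim)
  also have "\<dots> = X * A * Y"
    unfolding Y2 ..
  finally show ?thesis using \<open>X = X * A * Y\<close> by simp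
qed

lemma moore_penrose_eqI:
  assumes "A \<in> carrier_mat m n" and "penrose_conditions A X"
  shows "moore_penrose A = X"
  unfolding moore_penrose_def penrose_conditions_def[symmetric]
  using assms penrose_conditions_unique by blast

lemma (in vec_space) column_basis:
  assumes A: "A \<in> carrier_mat n nc"
  obtains ws where "set ws \<subseteq> set (cols A)" "distinct ws" "length ws = rank A"
    "lin_indpt (set ws)" "set (cols A) \<subseteq> span (set ws)"
proof -
  let ?P = "\<lambda>T. T \<subseteq> set (cols A) \<and> lin_indpt T"
  obtain S where max: "maximal S ?P"
    using maximal_exists[of ?P "card (set (cols A))" "{}"]
    by (meson List.finite_set card_mono empty_iff empty_subsetI finite_lin_indpt2 rev_finite_subset)
  have S: "S \<subseteq> set (cols A)" "lin_indpt S" using max unfolding maximal_def by auto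
  have SC: "S \<subseteq> carrier_vec n" using S(1) cols_dim A by blast
  obtain ws where ws: "set ws = S" "distinct ws"
    using finite_distinct_list[OF finite_subset[OF S(1)]] by blast
  have "length ws = rank A"
    using ws rank_card_indpt[OF A max] distinct_card by fastforce
  moreover have "set (cols A) \<subseteq> span S"
  proof
    fix c assume c: "c \<in> set (cols A)"
    show "c \<in> span S"
    proof (rule ccontr)
      assume ns: "c \<notin> span S"
      have "c \<notin> S" using ns in_own_span[OF SC] by auto
      moreover have "c \<in> carrier_vec n" using c cols_dim A by blast
      ultimately have "lin_indpt (S \<union> {c})" using lin_dep_iff_in_span[OF SC S(2)] ns by simp
      with max c S(1) have "S \<union> {c} = S" unfolding maximal_def by blast
      with \<open>c \<notin> S\<close> show False by auto
    qed
  qed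
  ultimately show ?thesis using that S ws by auto
qed

lemma (in vec_space) mat_factor_through_span:
  assumes F: "F \<in> carrier_mat n r" and dist: "distinct (cols F)" and A: "A \<in> carrier_mat n nc"
    and span: "set (cols A) \<subseteq> span (set (cols F))"
  obtains C where "C \<in> carrier_mat r nc" "A = F * C"
proof -
  have "\<exists>v. v \<in> carrier_vec r \<and> col A k = F *\<^sub>v v" if k: "k < nc" for k
  proof -
    have "col A k \<in> span (set (cols F))" using k A span by (auto simp: cols_def)
    then obtain a where "lincomb a (set (cols F)) = col A k"
      using finite_in_span[OF List.finite_set] F cols_dim by blast
    moreover have "F *\<^sub>v vec r (\<lambda>i. a (col F i)) = lincomb a (set (cols F))"
      by (rule mat_mult_eq_lincomb[OF F dist])
    ultimately show ?thesis by (intro exI[of _ "vec r (\<lambda>i. a (col F i))"]) auto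
  qed
  then obtain v where v: "\<And>k. k < nc \<Longrightarrow> v k \<in> carrier_vec r \<and> col A k = F *\<^sub>v v k"
    by metis
  define C where "C = mat_of_cols r (map v [0..<nc])"
  have C: "C \<in> carrier_mat r nc" unfolding C_def by auto
  have "A = F * C"
  proof (rule eq_matI)
    fix i k assume "i < dim_row (F * C)" "k < dim_col (F * C)"
    then have "i < n" "k < nc" using F C by auto
    then have "(F * C) $$ (i,k) = (F *\<^sub>v v k) $ i"
      using F C v[of k] unfolding C_def by (simp add: col_mat_of_cols)
    also have "\<dots> = col A k $ i" using v[of k] \<open>k < nc\<close> by simp
    also have "\<dots> = A $$ (i,k)" using A \<open>i < n\<close> \<open>k < nc\<close> by auto
    finally show "A $$ (i,k) = (F * C) $$ (i,k)" ..
  qed (use A F C in auto)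
  with C show ?thesis using that by blast
qed

lemma (in vec_space) full_rank_factorization:
  assumes A: "A \<in> carrier_mat n nc"
  obtains F C where "F \<in> carrier_mat n (rank A)" "C \<in> carrier_mat (rank A) nc" "A = F * C"
    "\<And>x. x \<in> carrier_vec (rank A) \<Longrightarrow> F *\<^sub>v x = 0\<^sub>v n \<Longrightarrow> x = 0\<^sub>v (rank A)"
    "\<And>l. l < rank A \<Longrightarrow> \<exists>k<nc. col C k = unit_vec (rank A) l"
proof -
  define r where "r = rank A"
  obtain ws where ws: "set ws \<subseteq> set (cols A)" "distinct ws" "length ws = r"
    "lin_indpt (set ws)" "set (cols A) \<subseteq> span (set ws)"
    using column_basis[OF A] unfolding r_def by blast
  define F where "F = mat_of_cols n ws"
  have F: "F \<in> carrier_mat n r" unfolding F_def using ws(3) by auto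
  have "set ws \<subseteq> carrier_vec n" using ws(1) cols_dim A by blast
  then have colsF: "cols F = ws" unfolding F_def by (simp add: cols_mat_of_cols)
  have inj: "x = 0\<^sub>v r" if x: "x \<in> carrier_vec r" and Fx: "F *\<^sub>v x = 0\<^sub>v n" for x
    using lin_depI[OF F x _ Fx] ws(2,4) colsF by auto
  obtain C where C: "C \<in> carrier_mat r nc" and AFC: "A = F * C"
    using mat_factor_through_span[OF F _ A] colsF ws(2,5) by blast
  \<comment> \<open>the columns of \<open>F\<close> are columns of \<open>A\<close>, so \<open>C\<close> contains the unit vectors\<close>
  have "\<exists>k<nc. col C k = unit_vec r l" if l: "l < r" for l
  proof -
    have "col F l \<in> set (cols A)" using colsF l F ws(1,3) by (metis cols_nth nth_mem subsetD carrier_matD(2))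
    then obtain k where k: "k < nc" and ck: "col A k = col F l"
      using A by (auto simp: cols_def)
    have "F *\<^sub>v (col C k - unit_vec r l) = col A k - col F l"
      using F C k l AFC by (simp add: mult_minus_distrib_mat_vec) (intro eq_vecI; auto)
    also have "\<dots> = 0\<^sub>v n" using ck F col_dim[of F l] by simp
    finally have "col C k - unit_vec r l = 0\<^sub>v r" using inj C k col_dim[of C k] by simp
    have "col C k = unit_vec r l"
    proof (rule eq_vecI)
      fix i assume "i < dim_vec (unit_vec r l)"
      then show "col C k $ i = unit_vec r l $ i"
        using arg_cong[OF \<open>col C k - unit_vec r l = 0\<^sub>v r\<close>, of "\<lambda>x. x $ i"] C k by simp
    qed (use C in simp)
    with k show ?thesis by auto
  qed
  then show ?thesis using that F C AFC inj unfolding r_def by blast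
qed

lemma full_rank_factorization_moore_penrose:
  fixes F C :: "complex mat"
  assumes F: "F \<in> carrier_mat m r" and C: "C \<in> carrier_mat r n"
    and dF: "det (mat_adjoint F * F) \<noteq> 0" and dC: "det (C * mat_adjoint C) \<noteq> 0"
  defines "P \<equiv> adj_inverse (mat_adjoint F * F)" and "R \<equiv> adj_inverse (C * mat_adjoint C)"
    and "K \<equiv> C * mat_adjoint (F * C)"
  shows "moore_penrose (F * C) = mat_adjoint C * (R * (P * mat_adjoint F))"
    and "K * F * (P * R) = 1\<^sub>m r"
    and "F * C * moore_penrose (F * C) = F * (P * R) * K"
proof -
  have FF: "mat_adjoint F * F \<in> carrier_mat r r" and CC: "C * mat_adjoint C \<in> carrier_mat r r"
    using F C by auto
  have P: "P \<in> carrier_mat r r" "mat_adjoint F * F * P = 1\<^sub>m r" "P * (mat_adjoint F * F) = 1\<^sub>m r"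
    unfolding P_def using adj_inverse[OF FF dF] by auto
  have R: "R \<in> carrier_mat r r" "C * mat_adjoint C * R = 1\<^sub>m r" "R * (C * mat_adjoint C) = 1\<^sub>m r"
    unfolding R_def using adj_inverse[OF CC dC] by auto
  have [simp]: "mat_adjoint P = P" unfolding P_def
    using adj_inverse_hermitian[OF FF dF] by (simp add: mat_adjoint_mult)
  have [simp]: "mat_adjoint R = R" unfolding R_def
    using adj_inverse_hermitian[OF CC dC] by (simp add: mat_adjoint_mult)
  have [simp]: "dim_row F = m" "dim_col F = r" "dim_row C = r" "dim_col C = n"
    "dim_row P = r" "dim_col P = r" "dim_row R = r" "dim_col R = r"
    using F C P(1) R(1) by auto
  have [simp]:
    "C * (mat_adjoint C * (R * Z)) = Z" "R * (C * (mat_adjoint C * Z)) = Z"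
    "mat_adjoint F * (F * (P * Z)) = Z" "P * (mat_adjoint F * (F * Z)) = Z"
    if "dim_row Z = r" for Z
    using mult_mult_cancel_left[OF _ _ _ that] P R by (simp_all add: assoc_mult_mat_dim)
  define X where "X = mat_adjoint C * (R * (P * mat_adjoint F))"
  have AX: "F * C * X = F * (P * mat_adjoint F)" and XA: "X * (F * C) = mat_adjoint C * (R * C)"
    unfolding X_def by (simp_all add: assoc_mult_mat_dim)
  have "penrose_conditions (F * C) X"
    unfolding penrose_conditions_def
  proof (intro conjI)
    show "X \<in> carrier_mat (dim_col (F * C)) (dim_row (F * C))" unfolding X_def by auto
    show "F * C * X * (F * C) = F * C" "X * (F * C) * X = X"
      unfolding AX assoc_mult_mat_dim[of X] XA by (simp_all add: X_def assoc_mult_mat_dim)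
    show "mat_adjoint (F * C * X) = F * C * X" "mat_adjoint (X * (F * C)) = X * (F * C)"
      unfolding AX XA by (simp_all add: mat_adjoint_mult assoc_mult_mat_dim)
  qed
  then show "moore_penrose (F * C) = mat_adjoint C * (R * (P * mat_adjoint F))"
    using moore_penrose_eqI F C X_def by (metis mult_carrier_mat)
  with AX show "F * C * moore_penrose (F * C) = F * (P * R) * K"
    by (simp add: X_def K_def mat_adjoint_mult assoc_mult_mat_dim)
  show "K * F * (P * R) = 1\<^sub>m r"
    using R by (simp add: K_def mat_adjoint_mult assoc_mult_mat_dim)
qed

section \<open>Minors and the Cauchy--Binet formula\<close>

lemma index_setsD:
  assumes "\<alpha> \<in> index_sets r m"
  shows "finite \<alpha>" "card \<alpha> = r" "\<alpha> \<subseteq> {0..<m}" "{i. i < m \<and> i \<in> \<alpha>} = \<alpha>"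
  using assms finite_subset unfolding index_sets_def by auto

lemma finite_index_sets: "finite (index_sets r m)"
  unfolding index_sets_def by (rule finite_subset[of _ "Pow {0..<m}"]) auto

lemma card_less_in_set:
  assumes "finite (\<alpha> :: nat set)" and "x \<in> \<alpha>"
  shows "card {a\<in>\<alpha>. a < x} < card \<alpha>"
proof -
  have "{a\<in>\<alpha>. a < x} \<subset> \<alpha>" using assms(2) by auto
  then show ?thesis using assms(1) by (simp add: psubset_card_mono)
qed

lemma pick_image:
  assumes "finite \<alpha>"
  shows "pick \<alpha> ` {0..<card \<alpha>} = \<alpha>"
proof
  show "\<alpha> \<subseteq> pick \<alpha> ` {0..<card \<alpha>}"
  proof
    fix x assume "x \<in> \<alpha>"
    then have "card {a\<in>\<alpha>. a < x} \<in> {0..<card \<alpha>}" using card_less_in_set[OF assms] by simp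
    then show "x \<in> pick \<alpha> ` {0..<card \<alpha>}"
      by (rule image_eqI[where f = "pick \<alpha>", OF pick_card_in_set[OF \<open>x \<in> \<alpha>\<close>, symmetric]])
  qed
qed (use pick_in_set_le in auto)

lemma inj_on_pick: "inj_on (pick \<alpha>) {0..<card \<alpha>}"
  by (rule inj_onI) (metis atLeastLessThan_iff linorder_neqE_nat pick_mono_le less_irrefl)

lemma submatrix_rows:
  assumes F: "F \<in> carrier_mat m r" and \<alpha>: "\<alpha> \<in> index_sets r m"
  shows "submatrix F \<alpha> UNIV \<in> carrier_mat r r"
    and "i < r \<Longrightarrow> j < r \<Longrightarrow> submatrix F \<alpha> UNIV $$ (i,j) = F $$ (pick \<alpha> i, j)"
  using F index_setsD[OF \<alpha>] by (auto simp: dim_submatrix submatrix_index pick_UNIV)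

lemma submatrix_cols:
  assumes K: "K \<in> carrier_mat r m" and \<alpha>: "\<alpha> \<in> index_sets r m"
  shows "submatrix K UNIV \<alpha> \<in> carrier_mat r r"
    and "i < r \<Longrightarrow> j < r \<Longrightarrow> submatrix K UNIV \<alpha> $$ (i,j) = K $$ (i, pick \<alpha> j)"
  using K index_setsD[OF \<alpha>] by (auto simp: dim_submatrix submatrix_index pick_UNIV)

lemma principal_submatrix:
  assumes G: "G \<in> carrier_mat m m" and \<alpha>: "\<alpha> \<in> index_sets r m"
  shows "submatrix G \<alpha> \<alpha> \<in> carrier_mat r r"
    and "i < r \<Longrightarrow> j < r \<Longrightarrow> submatrix G \<alpha> \<alpha> $$ (i,j) = G $$ (pick \<alpha> i, pick \<alpha> j)"
  using G index_setsD[OF \<alpha>] by (auto simp: dim_submatrix submatrix_index)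

definition index_injections :: "nat \<Rightarrow> nat \<Rightarrow> (nat \<Rightarrow> nat) set" where
  "index_injections r m = {f. (\<forall>i\<in>{0..<r}. f i \<in> {0..<m}) \<and> (\<forall>i. i \<notin> {0..<r} \<longrightarrow> f i = i)
      \<and> inj_on f {0..<r}}"

lemma det_mult_sum_injections:
  fixes K F :: "'a :: comm_ring_1 mat"
  assumes K: "K \<in> carrier_mat r m" and F: "F \<in> carrier_mat m r"
  shows "det (K * F) = (\<Sum>f\<in>index_injections r m.
           (\<Prod>i\<in>{0..<r}. K $$ (i, f i)) * det (mat\<^sub>r r r (\<lambda>i. row F (f i))))"
    (is "_ = sum ?h _")
proof -
  let ?U = "{0..<r}"
  let ?FF = "{f. (\<forall>i\<in>?U. f i \<in> {0..<m}) \<and> (\<forall>i. i \<notin> ?U \<longrightarrow> f i = i)}"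
  have rowF: "row F k \<in> carrier_vec r" for k using F by auto
  have "K * F = mat\<^sub>r r r (\<lambda>i. finsum_vec TYPE('a) r (\<lambda>k. K $$ (i,k) \<cdot>\<^sub>v row F k) {0..<m})"
    by (rule mat_mul_finsum_alt[OF K F])
  then have "det (K * F) = (\<Sum>f\<in>?FF. det (mat\<^sub>r r r (\<lambda>i. K $$ (i, f i) \<cdot>\<^sub>v row F (f i))))"
    by (simp add: det_linear_rows_sum[of "{0..<m}" "\<lambda>i k. K $$ (i,k) \<cdot>\<^sub>v row F k" r] rowF)
  also have "\<dots> = sum ?h ?FF"
    by (rule sum.cong[OF refl], rule det_rows_mul) (use rowF in auto)
  also have "\<dots> = sum ?h (index_injections r m)"
  proof (rule sum.mono_neutral_right)
    show "finite ?FF" by (rule finite_bounded_functions) auto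
    show "index_injections r m \<subseteq> ?FF" unfolding index_injections_def by auto
    show "\<forall>f\<in>?FF - index_injections r m. ?h f = 0"
    proof
      fix f assume "f \<in> ?FF - index_injections r m"
      then obtain i j where ij: "i \<in> ?U" "j \<in> ?U" "i \<noteq> j" "f i = f j"
        unfolding index_injections_def inj_on_def by auto
      have "det (mat\<^sub>r r r (\<lambda>i. row F (f i))) = 0"
        by (rule det_identical_rows[OF _ ij(3)]) (use ij rowF in auto)
      then show "?h f = 0" by simp
    qed
  qed
  finally show ?thesis .
qed

lemma rank_in_image_permutes:
  fixes f :: "nat \<Rightarrow> nat"
  assumes inj: "inj_on f {0..<r}"
  shows "(\<lambda>x. if x < r then card {a \<in> f ` {0..<r}. a < f x} else x) permutes {0..<r}"
    (is "?\<sigma> permutes _")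
proof -
  have card: "card (f ` {0..<r}) = r" using card_image[OF inj] by simp
  have pick: "pick (f ` {0..<r}) (?\<sigma> i) = f i" if "i < r" for i
    using that pick_card_in_set[of "f i" "f ` {0..<r}"] by simp
  have into: "?\<sigma> ` {0..<r} \<subseteq> {0..<r}"
    using card_less_in_set[of "f ` {0..<r}"] card by auto
  have inj\<sigma>: "inj_on ?\<sigma> {0..<r}"
  proof (rule inj_onI)
    fix x y assume "x \<in> {0..<r}" "y \<in> {0..<r}" "?\<sigma> x = ?\<sigma> y"
    then have "f x = f y" using pick[of x] pick[of y] by auto
    then show "x = y" using inj_onD[OF inj] \<open>x \<in> {0..<r}\<close> \<open>y \<in> {0..<r}\<close> by blast
  qed
  have "bij_betw ?\<sigma> {0..<r} {0..<r}"
    using endo_inj_surj[OF _ into inj\<sigma>] inj\<sigma> by (simp add: bij_betw_def)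
  then show ?thesis by (rule bij_imp_permutes) simp
qed

lemma bij_betw_pick_permutations:
  "bij_betw (\<lambda>(\<alpha>,\<sigma>) i. if i < r then pick \<alpha> (\<sigma> i) else i)
     (SIGMA \<alpha>:index_sets r m. {\<sigma>. \<sigma> permutes {0..<r}}) (index_injections r m)"
    (is "bij_betw ?\<phi> ?S ?I")
proof -
  let ?\<psi> = "\<lambda>f. (f ` {0..<r}, \<lambda>x. if x < r then card {a \<in> f ` {0..<r}. a < f x} else x)"
  have forward: "?\<psi> (?\<phi> (\<alpha>,\<sigma>)) = (\<alpha>,\<sigma>) \<and> ?\<phi> (\<alpha>,\<sigma>) \<in> ?I"
    if \<alpha>: "\<alpha> \<in> index_sets r m" and \<sigma>: "\<sigma> permutes {0..<r}" for \<alpha> \<sigma>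
  proof -
    define f where "f = ?\<phi> (\<alpha>,\<sigma>)"
    then have f: "f i = (if i < r then pick \<alpha> (\<sigma> i) else i)" for i by simp
    note \<alpha>' = index_setsD[OF \<alpha>]
    have \<sigma>_less: "\<sigma> i < r" if "i < r" for i using permutes_in_image[OF \<sigma>] that by auto
    have "f ` {0..<r} = pick \<alpha> ` \<sigma> ` {0..<r}" by (auto simp: f image_iff)
    then have img: "f ` {0..<r} = \<alpha>" using permutes_image[OF \<sigma>] pick_image[OF \<alpha>'(1)] \<alpha>'(2) by simp
    have "?\<psi> f = (\<alpha>,\<sigma>)"
      using img card_pick_le[of "\<sigma> _" \<alpha>] \<alpha>'(2) \<sigma>_less permutes_not_in[OF \<sigma>]
      by (auto simp: f fun_eq_iff)
    moreover have "inj_on f {0..<r}"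
    proof (rule inj_onI)
      fix x y assume "x \<in> {0..<r}" "y \<in> {0..<r}" "f x = f y"
      then have "\<sigma> x = \<sigma> y" using inj_onD[OF inj_on_pick] \<sigma>_less \<alpha>'(2) by (auto simp: f)
      then show "x = y" using permutes_inj[OF \<sigma>] by (auto dest: injD)
    qed
    moreover have "f i \<in> {0..<m}" if "i \<in> {0..<r}" for i using img \<alpha>'(3) that by blast
    ultimately show ?thesis unfolding f_def[symmetric] index_injections_def by (simp add: f)
  qed
  have backward: "?\<phi> (?\<psi> f) = f \<and> ?\<psi> f \<in> ?S" if f: "f \<in> ?I" for f
  proof -
    have inj: "inj_on f {0..<r}" using f unfolding index_injections_def by auto
    have "?\<phi> (?\<psi> f) = f"
      using f pick_card_in_set[of "f _" "f ` {0..<r}"] unfolding index_injections_def by auto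
    moreover have "f ` {0..<r} \<in> index_sets r m"
      using f card_image[OF inj] unfolding index_injections_def index_sets_def by auto
    ultimately show ?thesis using rank_in_image_permutes[OF inj] by simp
  qed
  show ?thesis
    by (rule bij_betw_byWitness[where f' = ?\<psi>]) (use forward backward in force)+
qed

lemma det_rows_pick_permute:
  assumes F: "F \<in> carrier_mat m r" and \<alpha>: "\<alpha> \<in> index_sets r m" and \<sigma>: "\<sigma> permutes {0..<r}"
  shows "det (mat\<^sub>r r r (\<lambda>i. row F (pick \<alpha> (\<sigma> i)))) = signof \<sigma> * det (submatrix F \<alpha> UNIV)"
proof -
  have "mat\<^sub>r r r (\<lambda>i. row F (pick \<alpha> (\<sigma> i))) = mat r r (\<lambda>(i,j). submatrix F \<alpha> UNIV $$ (\<sigma> i, j))"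
  proof (intro eq_matI)
    fix i j assume "i < dim_row (mat r r (\<lambda>(i,j). submatrix F \<alpha> UNIV $$ (\<sigma> i, j)))"
      "j < dim_col (mat r r (\<lambda>(i,j). submatrix F \<alpha> UNIV $$ (\<sigma> i, j)))"
    then have "i < r" "j < r" "\<sigma> i < r" using permutes_in_image[OF \<sigma>] by auto
    moreover have "pick \<alpha> (\<sigma> i) < m"
      using pick_in_set_le[of "\<sigma> i" \<alpha>] index_setsD[OF \<alpha>] \<open>\<sigma> i < r\<close> by auto
    ultimately show "mat\<^sub>r r r (\<lambda>i. row F (pick \<alpha> (\<sigma> i))) $$ (i, j) =
        mat r r (\<lambda>(i,j). submatrix F \<alpha> UNIV $$ (\<sigma> i, j)) $$ (i, j)"
      using F by (simp add: submatrix_rows[OF F \<alpha>])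
  qed auto
  then show ?thesis using det_permute_rows[OF submatrix_rows(1)[OF F \<alpha>] \<sigma>] by simp
qed

lemma det_submatrix_cols:
  assumes K: "K \<in> carrier_mat r m" and \<alpha>: "\<alpha> \<in> index_sets r m"
  shows "det (submatrix K UNIV \<alpha>) =
    (\<Sum>\<sigma>\<in>{\<sigma>. \<sigma> permutes {0..<r}}. signof \<sigma> * (\<Prod>i\<in>{0..<r}. K $$ (i, pick \<alpha> (\<sigma> i))))"
  unfolding det_def'[OF submatrix_cols(1)[OF K \<alpha>]]
  by (intro sum.cong refl arg_cong2[where f = "(*)"] prod.cong)
    (auto simp: submatrix_cols(2)[OF K \<alpha>] dest: permutes_in_image)

theorem cauchy_binet:
  fixes K F :: "'a :: comm_ring_1 mat"
  assumes K: "K \<in> carrier_mat r m" and F: "F \<in> carrier_mat m r"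
  shows "det (K * F) = (\<Sum>\<alpha>\<in>index_sets r m. det (submatrix K UNIV \<alpha>) * det (submatrix F \<alpha> UNIV))"
proof -
  let ?P = "{\<sigma>. \<sigma> permutes {0..<r}}"
  let ?g = "\<lambda>\<alpha> \<sigma>. (\<Prod>i\<in>{0..<r}. K $$ (i, pick \<alpha> (\<sigma> i))) * (signof \<sigma> * det (submatrix F \<alpha> UNIV))"
  have "det (K * F) = (\<Sum>(\<alpha>,\<sigma>)\<in>(SIGMA \<alpha>:index_sets r m. ?P). ?g \<alpha> \<sigma>)"
    unfolding det_mult_sum_injections[OF K F]
    unfolding sum.reindex_bij_betw[OF bij_betw_pick_permutations, symmetric]
  proof (intro sum.cong refl, clarify)
    fix \<alpha> \<sigma> assume \<alpha>: "\<alpha> \<in> index_sets r m" and \<sigma>: "\<sigma> permutes {0..<r}"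
    have "mat\<^sub>r r r (\<lambda>i. row F (if i < r then pick \<alpha> (\<sigma> i) else i))
        = mat\<^sub>r r r (\<lambda>i. row F (pick \<alpha> (\<sigma> i)))" by (intro eq_matI) auto
    then show "(\<Prod>i\<in>{0..<r}. K $$ (i, if i < r then pick \<alpha> (\<sigma> i) else i)) *
        det (mat\<^sub>r r r (\<lambda>i. row F (if i < r then pick \<alpha> (\<sigma> i) else i))) = ?g \<alpha> \<sigma>"
      using det_rows_pick_permute[OF F \<alpha> \<sigma>] by simp
  qed
  also have "\<dots> = (\<Sum>\<alpha>\<in>index_sets r m. \<Sum>\<sigma>\<in>?P. ?g \<alpha> \<sigma>)"
    by (rule sum.Sigma[symmetric]) (auto simp: finite_index_sets finite_permutations)
  also have "\<dots> = (\<Sum>\<alpha>\<in>index_sets r m. det (submatrix K UNIV \<alpha>) * det (submatrix F \<alpha> UNIV))"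
    by (intro sum.cong refl)
      (simp add: det_submatrix_cols[OF K] sum_distrib_left ac_simps)
  finally show ?thesis .
qed

lemma det_submatrix_mult:
  fixes F K :: "'a :: comm_ring_1 mat"
  assumes F: "F \<in> carrier_mat m r" and K: "K \<in> carrier_mat r m"
    and \<alpha>: "\<alpha> \<in> index_sets r m" and \<beta>: "\<beta> \<in> index_sets r m"
  shows "det (submatrix (F * K) \<alpha> \<beta>) = det (submatrix F \<alpha> UNIV) * det (submatrix K UNIV \<beta>)"
proof -
  note \<alpha>' = index_setsD[OF \<alpha>] and \<beta>' = index_setsD[OF \<beta>]
  have "submatrix (F * K) \<alpha> \<beta> = submatrix F \<alpha> UNIV * submatrix K UNIV \<beta>"
  proof (rule eq_matI)
    fix i j assume "i < dim_row (submatrix F \<alpha> UNIV * submatrix K UNIV \<beta>)"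
      "j < dim_col (submatrix F \<alpha> UNIV * submatrix K UNIV \<beta>)"
    then have ij: "i < r" "j < r" using submatrix_rows(1)[OF F \<alpha>] submatrix_cols(1)[OF K \<beta>] by auto
    then have "pick \<alpha> i < m" "pick \<beta> j < m"
      using pick_in_set_le[of i \<alpha>] pick_in_set_le[of j \<beta>] \<alpha>' \<beta>' by auto
    then show "submatrix (F * K) \<alpha> \<beta> $$ (i,j) = (submatrix F \<alpha> UNIV * submatrix K UNIV \<beta>) $$ (i,j)"
      using F K ij \<alpha>' \<beta>' submatrix_rows[OF F \<alpha>] submatrix_cols[OF K \<beta>]
      by (auto simp: submatrix_index scalar_prod_def dim_submatrix intro!: sum.cong)
  qed (use F K \<alpha>' \<beta>' in \<open>auto simp: dim_submatrix\<close>)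
  then show ?thesis using det_mult[OF submatrix_rows(1)[OF F \<alpha>] submatrix_cols(1)[OF K \<beta>]] by simp
qed

lemma d_r_mult_commute:
  fixes F K :: "'a :: comm_ring_1 mat"
  assumes F: "F \<in> carrier_mat m r" and K: "K \<in> carrier_mat r m"
  shows "d_r r (F * K) = det (K * F)"
  unfolding d_r_def cauchy_binet[OF K F] using F
  by (auto simp: det_submatrix_mult[OF F K] ac_simps intro!: sum.cong)

section \<open>Principal minors of a matrix with a replaced row\<close>

lemma det_zero_row:
  fixes A :: "'a :: comm_ring_1 mat"
  assumes A: "A \<in> carrier_mat n n" and k: "k < n" and z: "\<And>j. j < n \<Longrightarrow> A $$ (k,j) = 0"
  shows "det A = 0"
proof -
  have "A = mat\<^sub>r n n (\<lambda>i. if i = k then 0\<^sub>v n else row A i)"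
    by (rule eq_matI) (use A z in auto)
  also have "det \<dots> = 0" by (rule det_row_0[OF k]) (use A in auto)
  finally show ?thesis .
qed

lemma sum_principal_minors_containing:
  fixes G :: "'a :: comm_ring_1 mat"
  assumes G: "G \<in> carrier_mat m m" and j: "j < m"
  shows "(\<Sum>\<alpha>\<in>{\<alpha>\<in>index_sets r m. j \<in> \<alpha>}. det (submatrix G \<alpha> \<alpha>))
    = d_r r G - d_r r (replace_row G j (0\<^sub>v m))"
proof -
  define G0 where "G0 = replace_row G j (0\<^sub>v m)"
  have G0: "G0 \<in> carrier_mat m m" "\<And>a b. a < m \<Longrightarrow> b < m \<Longrightarrow> G0 $$ (a,b) = (if a = j then 0 else G $$ (a,b))"
    using G unfolding G0_def replace_row_def by auto
  let ?S = "index_sets r m" and ?J = "{\<alpha>. j \<in> \<alpha>}"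
  have split: "d_r r M = (\<Sum>\<alpha>\<in>?S \<inter> ?J. det (submatrix M \<alpha> \<alpha>)) + (\<Sum>\<alpha>\<in>?S - ?J. det (submatrix M \<alpha> \<alpha>))"
    if "M \<in> carrier_mat m m" for M
    using that unfolding d_r_def by (simp add: sum.Int_Diff[OF finite_index_sets])
  have pick: "pick \<alpha> i \<in> \<alpha>" "pick \<alpha> i < m" if "\<alpha> \<in> ?S" "i < r" for \<alpha> i
    using pick_in_set_le[of i \<alpha>] index_setsD[OF that(1)] that(2) by auto
  \<comment> \<open>minors avoiding \<open>j\<close> do not see the replaced row; minors through \<open>j\<close> contain a zero row\<close>
  have "submatrix G0 \<alpha> \<alpha> = submatrix G \<alpha> \<alpha>" if \<alpha>: "\<alpha> \<in> ?S - ?J" for \<alpha>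
  proof -
    have \<alpha>S: "\<alpha> \<in> ?S" and "j \<notin> \<alpha>" using \<alpha> by auto
    note sub = principal_submatrix[OF G \<alpha>S] principal_submatrix[OF G0(1) \<alpha>S]
    show ?thesis
    proof (rule eq_matI)
      fix a b assume "a < dim_row (submatrix G \<alpha> \<alpha>)" "b < dim_col (submatrix G \<alpha> \<alpha>)"
      then have "a < r" "b < r" using sub(1) by auto
      moreover have "pick \<alpha> a \<noteq> j" using pick[OF \<alpha>S \<open>a < r\<close>] \<open>j \<notin> \<alpha>\<close> by auto
      ultimately show "submatrix G0 \<alpha> \<alpha> $$ (a,b) = submatrix G \<alpha> \<alpha> $$ (a,b)"
        using sub(2,4) pick(2)[OF \<alpha>S] G0(2) by simp
    qed (use sub in auto)
  qed
  moreover have "det (submatrix G0 \<alpha> \<alpha>) = 0" if \<alpha>: "\<alpha> \<in> ?S \<inter> ?J" for \<alpha>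
  proof (rule det_zero_row[OF principal_submatrix(1)[OF G0(1)]])
    show "card {a\<in>\<alpha>. a < j} < r"
      using card_less_in_set[of \<alpha> j] index_setsD(1,2)[of \<alpha> r m] \<alpha> by auto
    show "submatrix G0 \<alpha> \<alpha> $$ (card {a\<in>\<alpha>. a < j}, b) = 0" if "b < r" for b
      using principal_submatrix(2)[OF G0(1)] \<alpha> \<open>card {a\<in>\<alpha>. a < j} < r\<close> that
        pick_card_in_set[of j \<alpha>] pick G0(2) j by auto
  qed (use \<alpha> in auto)
  ultimately have "d_r r G0 = (\<Sum>\<alpha>\<in>?S - ?J. det (submatrix G \<alpha> \<alpha>))"
    using split[OF G0(1)] by simp
  moreover have "{\<alpha>\<in>?S. j \<in> \<alpha>} = ?S \<inter> ?J" by auto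
  ultimately show ?thesis using split[OF G] unfolding G0_def by simp
qed

lemma replace_row_replace_row [simp]: "replace_row (replace_row F j v) j w = replace_row F j w"
  unfolding replace_row_def by (rule eq_matI) auto

lemma replace_row_mult:
  assumes F: "F \<in> carrier_mat m r" and K: "K \<in> carrier_mat r n" and v: "v \<in> carrier_vec r"
  shows "replace_row F j v * K = replace_row (F * K) j (vec n (\<lambda>b. v \<bullet> col K b))"
  using F K v unfolding replace_row_def by (intro eq_matI) (auto simp: row_def scalar_prod_def)

lemma det_mult_replace_row:
  fixes K F Mi :: "'a :: idom mat"
  assumes K: "K \<in> carrier_mat r m" and F: "F \<in> carrier_mat m r" and Mi: "Mi \<in> carrier_mat r r"
    and inv: "K * F * Mi = 1\<^sub>m r" and w: "w \<in> carrier_vec r" and j: "j < m"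
  shows "det (K * replace_row F j w) = det (K * F) * (1 + (w - row F j) \<bullet> (Mi *\<^sub>v col K j))"
proof -
  define U where "U = mat r 1 (\<lambda>(a,_). K $$ (a,j))"
  define W where "W = mat 1 r (\<lambda>(_,b). (w - row F j) $ b)"
  \<comment> \<open>replacing row \<open>j\<close> of \<open>F\<close> is a rank one update of \<open>K F\<close>\<close>
  have "K * replace_row F j w = K * F + U * W"
  proof (rule eq_matI)
    fix a b assume "a < dim_row (K * F + U * W)" "b < dim_col (K * F + U * W)"
    then have ab: "a < r" "b < r" using K F by (auto simp: U_def W_def)
    have "(K * replace_row F j w) $$ (a,b) = (\<Sum>k = 0..<m. K $$ (a,k) * (if k = j then w $ b else F $$ (k,b)))"
      using K F w ab by (auto simp: replace_row_def scalar_prod_def intro!: sum.cong)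
    also have "\<dots> = (\<Sum>k = 0..<m. K $$ (a,k) * F $$ (k,b)
        + (if k = j then K $$ (a,j) * (w $ b - F $$ (j,b)) else 0))"
      by (rule sum.cong) (auto simp: algebra_simps)
    also have "\<dots> = (K * F + U * W) $$ (a,b)"
      using K F w ab j by (simp add: sum.distrib scalar_prod_def U_def W_def)
    finally show "(K * replace_row F j w) $$ (a,b) = (K * F + U * W) $$ (a,b)" .
  qed (use K F in \<open>auto simp: replace_row_def U_def W_def\<close>)
  moreover have "(W * Mi * U) $$ (0,0) = (w - row F j) \<bullet> (Mi *\<^sub>v col K j)"
    using K Mi w j by (auto simp: U_def W_def scalar_prod_def assoc_mult_mat_dim intro!: sum.cong)
  ultimately show ?thesis
    using det_add_rank_one[of "K * F" r Mi U W] K F Mi inv by (auto simp: U_def W_def)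
qed

lemma sum_principal_minors_replace_row:
  fixes F K Mi :: "'a :: idom mat"
  assumes F: "F \<in> carrier_mat m r" and K: "K \<in> carrier_mat r m" and Mi: "Mi \<in> carrier_mat r r"
    and inv: "K * F * Mi = 1\<^sub>m r" and i: "i < m" and j: "j < m"
  shows "(\<Sum>\<alpha>\<in>{\<alpha>\<in>index_sets r m. j \<in> \<alpha>}. det (submatrix (replace_row (F * K) j (row (F * K) i)) \<alpha> \<alpha>))
    = det (K * F) * (F * Mi * K) $$ (i,j)"
proof -
  define x where "x = Mi *\<^sub>v col K j"
  define F' where "F' = replace_row F j (row F i)"
  have F': "F' \<in> carrier_mat m r" and F0: "replace_row F j (0\<^sub>v r) \<in> carrier_mat m r"
    using F unfolding F'_def replace_row_def by auto
  have x: "x \<in> carrier_vec r" and rows: "row F i \<in> carrier_vec r" "row F j \<in> carrier_vec r"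
    using Mi K F unfolding x_def by auto
  have "replace_row (F * K) j (row (F * K) i) = F' * K"
    unfolding F'_def using replace_row_mult[OF F K rows(1)] F K i by simp
  moreover have "vec m (\<lambda>b. 0\<^sub>v r \<bullet> col K b) = 0\<^sub>v m" using K by (intro eq_vecI) auto
  then have "replace_row (F' * K) j (0\<^sub>v m) = replace_row F j (0\<^sub>v r) * K"
    using replace_row_mult[OF F' K, of "0\<^sub>v r" j] unfolding F'_def by simp
  moreover have "det (K * F') - det (K * replace_row F j (0\<^sub>v r)) = det (K * F) * (row F i \<bullet> x)"
    unfolding F'_def det_mult_replace_row[OF K F Mi inv rows(1) j, folded x_def]
      det_mult_replace_row[OF K F Mi inv zero_carrier_vec j, folded x_def]
    using rows x F by (simp add: minus_scalar_prod_distrib[of _ r] scalar_prod_uminus_left[of "row F j" x]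
        algebra_simps)
  moreover have "(F * Mi * K) $$ (i,j) = row F i \<bullet> x"
    unfolding x_def using F Mi K i j by (simp add: assoc_mult_mat_dim mult_mat_vec_def)
  ultimately show ?thesis
    using sum_principal_minors_containing[of "F' * K" m j r] F' K j
    by (simp add: d_r_mult_commute[OF F' K] d_r_mult_commute[OF F0 K])
qed

theorem corollary2p3:
  fixes A :: "complex mat" and m n r :: nat
  assumes "A \<in> carrier_mat m n"
    and "vec_space.rank m A = r"
    and "r < min m n \<or> (r = n \<and> n < m)"
    and "i < m" and "j < m"
  shows "(A * moore_penrose A) $$ (i, j) =
    (\<Sum>\<alpha>\<in>{\<alpha>\<in>index_sets r m. j \<in> \<alpha>}.
        det (submatrix (replace_row (A * mat_adjoint A) j (row (A * mat_adjoint A) i)) \<alpha> \<alpha>))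
    / d_r r (A * mat_adjoint A)"
proof -
  obtain F C where F: "F \<in> carrier_mat m r" and C: "C \<in> carrier_mat r n" and A: "A = F * C"
    and F_inj: "\<And>x. x \<in> carrier_vec r \<Longrightarrow> F *\<^sub>v x = 0\<^sub>v m \<Longrightarrow> x = 0\<^sub>v r"
    and C_unit: "\<And>l. l < r \<Longrightarrow> \<exists>k<n. col C k = unit_vec r l"
    using vec_space.full_rank_factorization[OF assms(1)] assms(2) by metis
  define K where "K = C * mat_adjoint A"
  define Mi where "Mi = adj_inverse (mat_adjoint F * F) * adj_inverse (C * mat_adjoint C)"
  note dF = det_gram_nonzero[OF F F_inj] and dC = det_gram_adjoint_nonzero[OF C C_unit]
  note mp = full_rank_factorization_moore_penrose[OF F C dF dC, folded A Mi_def K_def]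
  have K: "K \<in> carrier_mat r m" using F C unfolding K_def A by auto
  have Mi: "Mi \<in> carrier_mat r r"
    unfolding Mi_def using adj_inverse(1)[OF _ dF] adj_inverse(1)[OF _ dC] F C
    by (metis mat_adjoint_carrier mult_carrier_mat)
  have "det (K * F) * det Mi = 1" using det_mult[OF mult_carrier_mat[OF K F] Mi] mp(2) by simp
  then have "det (K * F) \<noteq> 0" by auto
  moreover have "A * mat_adjoint A = F * K" unfolding K_def A using F C by (simp add: assoc_mult_mat_dim)
  ultimately show ?thesis
    using sum_principal_minors_replace_row[OF F K Mi mp(2) assms(4,5)] mp(3) d_r_mult_commute[OF F K]
    by simp
qed

end
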